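(* Let $\{\mathbb{G}_n,\ n=2,3,\ldots\}$ be a sequence of random graphs as described in the context, with $\lim_{n\to\infty}|V_n|=\infty$, satisfying: (A) for each $n$, $D_{n,k}$ has the same distribution as $D_{n,1}$ for all $k\in V_n$, and for all distinct $k,\ell\in V_n$, $(D_{n,k},D_{n,\ell})$ has the same joint distribution as $(D_{n,1},D_{n,2})$; (B) there is an $\mathbb{N}$-valued random variable $D$ with pmf $p=(p(d),\ d=0,1,\ldots)$ such that $D_{n,1}\to D$ in distribution as $n\to\infty$; (C) for each $d=0,1,\ldots$, $\lim_{n\to\infty}\mathrm{Cov}\big[\mathbf{1}[D_{n,1}=d],\mathbf{1}[D_{n,2}=d]\big]=0$. Then for every $d=0,1,\ldots$, $P_n(d)\to p(d)$ in probability as $n\to\infty$.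
   Context: All random variables are defined on a common probability space $(\Omega,\mathcal{F},\mathbb{P})$. For each $n=2,3,\ldots$, $\mathbb{G}_n$ is a random (possibly directed, self-loops allowed) graph on the deterministic finite node set $V_n=\{1,\ldots,k_n\}$ with $k_n\ge 2$, determined by $\{0,1\}$-valued edge random variables $\{\chi_n(k,\ell),\ k,\ell\in V_n\}$ ($\chi_n(k,\ell)=1$ iff there is an edge from $k$ to $\ell$). The degree of node $k$ is $D_{n,k}=\sum_{\ell\in V_n}\chi_n(k,\ell)$. For $d=0,1,\ldots$, $N_n(d)=\sum_{k\in V_n}\mathbf{1}[D_{n,k}=d]$ and $P_n(d)=N_n(d)/|V_n|$ is the fraction of nodes with degree $d$. $\mathbb{N}=\{0,1,2,\ldots\}$. *)

theory Defs
  imports "HOL-Probability.Probability"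
begin

text \<open>Degree of node k in graph n: number of l in V_n = {1..kn n} with an edge k -> l.
  The edge indicator chi n k l \<omega> is bool-valued (True iff edge from k to l).\<close>
definition degree :: "(nat \<Rightarrow> nat) \<Rightarrow> (nat \<Rightarrow> nat \<Rightarrow> nat \<Rightarrow> 'a \<Rightarrow> bool) \<Rightarrow> nat \<Rightarrow> nat \<Rightarrow> 'a \<Rightarrow> nat"
  where "degree kn chi n k \<omega> = card {l \<in> {1..kn n}. chi n k l \<omega>}"

definition node_count :: "(nat \<Rightarrow> nat) \<Rightarrow> (nat \<Rightarrow> nat \<Rightarrow> nat \<Rightarrow> 'a \<Rightarrow> bool) \<Rightarrow> nat \<Rightarrow> nat \<Rightarrow> 'a \<Rightarrow> nat"
  where "node_count kn chi n d \<omega> = card {k \<in> {1..kn n}. degree kn chi n k \<omega> = d}"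

definition degree_frac :: "(nat \<Rightarrow> nat) \<Rightarrow> (nat \<Rightarrow> nat \<Rightarrow> nat \<Rightarrow> 'a \<Rightarrow> bool) \<Rightarrow> nat \<Rightarrow> nat \<Rightarrow> 'a \<Rightarrow> real"
  where "degree_frac kn chi n d \<omega> = real (node_count kn chi n d \<omega>) / real (card {1..kn n})"

definition covar :: "'a measure \<Rightarrow> ('a \<Rightarrow> real) \<Rightarrow> ('a \<Rightarrow> real) \<Rightarrow> real"
  where "covar M X Y = (\<integral>\<omega>. (X \<omega> - (\<integral>x. X x \<partial>M)) * (Y \<omega> - (\<integral>x. Y x \<partial>M)) \<partial>M)"

definition conv_in_prob :: "'a measure \<Rightarrow> (nat \<Rightarrow> 'a \<Rightarrow> real) \<Rightarrow> real \<Rightarrow> bool"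
  where "conv_in_prob M X c \<longleftrightarrow>
    (\<forall>\<epsilon>>0. (\<lambda>n. measure M {\<omega> \<in> space M. \<bar>X n \<omega> - c\<bar> > \<epsilon>}) \<longlonglongrightarrow> 0)"

end

theory Submission
  imports Defs
begin

(* Every degree indicator 1[D_{n,k} = d] has the mean q_n = P(D_{n,1} = d), and by exchangeability
   every pair of distinct indicators has the covariance c_n of the first two. Since P_n(d) is the
   average of the indicators, E[(P_n(d) - q_n)^2] <= 1/|V_n| + |c_n|, which tends to 0 by (C), so
   Chebyshev's inequality gives P_n(d) - q_n -> 0 in probability. Finally q_n -> p(d) by (B):
   the degrees are integer-valued, so the cdfs at the continuity points d +- 1/2 converge. *)

lemma measurable_pair_countable:
  fixes f :: "'a \<Rightarrow> 'b::countable" and g :: "'a \<Rightarrow> 'c::countable"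
  assumes "f \<in> measurable M (count_space UNIV)" "g \<in> measurable M (count_space UNIV)"
  shows "(\<lambda>\<omega>. (f \<omega>, g \<omega>)) \<in> measurable M (count_space UNIV)"
  using measurable_Pair[OF assms] by (simp add: pair_measure_countable)

lemma measurable_card_filter:
  assumes "finite F" "\<And>l. l \<in> F \<Longrightarrow> P l \<in> measurable M (count_space UNIV)"
  shows "(\<lambda>\<omega>. card {l \<in> F. P l \<omega>}) \<in> measurable M (count_space UNIV)"
  using assms
proof (induction F rule: finite_induct)
  case (insert x F)
  have "card {l \<in> insert x F. P l \<omega>} = card {l \<in> F. P l \<omega>} + of_bool (P x \<omega>)" for \<omega>
  proof (cases "P x \<omega>")
    case True
    then have "{l \<in> insert x F. P l \<omega>} = insert x {l \<in> F. P l \<omega>}" by auto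
    then show ?thesis using True insert.hyps by simp
  next
    case False
    then have "{l \<in> insert x F. P l \<omega>} = {l \<in> F. P l \<omega>}" by auto
    then show ?thesis using False by simp
  qed
  moreover have "(\<lambda>\<omega>. (\<lambda>(m, b). m + of_bool b) (card {l \<in> F. P l \<omega>}, P x \<omega>)) \<in> measurable M (count_space UNIV)"
    using insert.IH insert.prems
    by (intro measurable_compose[OF measurable_pair_countable, where g = "\<lambda>(m, b). m + of_bool b"]) auto
  ultimately show ?case by simp
qed simp

lemma integral_eq_if_distr_eq:
  fixes f :: "'b \<Rightarrow> real"
  assumes X: "X \<in> measurable M N" and Y: "Y \<in> measurable M N"
    and distr_eq: "distr M N X = distr M N Y" and f: "f \<in> borel_measurable N"
  shows "(\<integral>\<omega>. f (X \<omega>) \<partial>M) = (\<integral>\<omega>. f (Y \<omega>) \<partial>M)"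
proof -
  have "(\<integral>\<omega>. f (X \<omega>) \<partial>M) = (\<integral>x. f x \<partial>distr M N X)"
    by (rule integral_distr[OF X f, symmetric])
  also have "\<dots> = (\<integral>\<omega>. f (Y \<omega>) \<partial>M)"
    unfolding distr_eq by (rule integral_distr[OF Y f])
  finally show ?thesis .
qed

context prob_space
begin

lemma cdf_distr_real_of_nat:
  fixes Y :: "'a \<Rightarrow> nat"
  assumes "Y \<in> measurable M (count_space UNIV)"
  shows "cdf (distr M borel (\<lambda>\<omega>. real (Y \<omega>))) x = prob {\<omega> \<in> space M. real (Y \<omega>) \<le> x}"
proof -
  have "(\<lambda>\<omega>. real (Y \<omega>)) \<in> borel_measurable M"
    by (simp add: measurable_compose[OF assms])
  then show ?thesis
    unfolding cdf_def2 by (subst measure_distr) (auto intro!: arg_cong[where f = prob])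
qed

lemma isCont_cdf_distr_real_of_nat:
  fixes Y :: "'a \<Rightarrow> nat"
  assumes Y: "Y \<in> measurable M (count_space UNIV)" and x: "x \<notin> \<nat>"
  shows "isCont (cdf (distr M borel (\<lambda>\<omega>. real (Y \<omega>)))) x"
proof -
  have Y': "(\<lambda>\<omega>. real (Y \<omega>)) \<in> borel_measurable M"
    by (simp add: measurable_compose[OF Y])
  have dist: "finite_borel_measure (distr M borel (\<lambda>\<omega>. real (Y \<omega>)))"
    using Y' by (intro real_distribution.finite_borel_measure_M) simp
  have "(\<lambda>\<omega>. real (Y \<omega>)) -` {x} \<inter> space M = {}"
    using x by (auto simp: Nats_def)
  then show ?thesis
    unfolding finite_borel_measure.isCont_cdf[OF dist] by (subst measure_distr[OF Y']) auto
qed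

lemma prob_eq_nat_cdf_diff:
  fixes Y :: "'a \<Rightarrow> nat"
  assumes Y: "Y \<in> measurable M (count_space UNIV)"
  shows "prob {\<omega> \<in> space M. Y \<omega> = d} =
    cdf (distr M borel (\<lambda>\<omega>. real (Y \<omega>))) (real d + 1/2) - cdf (distr M borel (\<lambda>\<omega>. real (Y \<omega>))) (real d - 1/2)"
proof -
  have sets: "{\<omega> \<in> space M. P (Y \<omega>)} \<in> events" for P
  proof -
    have "{\<omega> \<in> space M. P (Y \<omega>)} = Y -` {a. P a} \<inter> space M" by auto
    then show ?thesis using measurable_sets[OF Y, of "{a. P a}"] by simp
  qed
  have le_iff: "real a \<le> real d + 1/2 \<longleftrightarrow> a \<le> d" for a
  proof
    assume "real a \<le> real d + 1/2"
    then have "real a < real (Suc d)" by simp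
    then show "a \<le> d" by (simp only: of_nat_less_iff less_Suc_eq_le)
  qed simp
  have less_iff: "real a \<le> real d - 1/2 \<longleftrightarrow> a < d" for a
  proof
    assume "a < d"
    then have "real (Suc a) \<le> real d" by (simp only: of_nat_le_iff Suc_le_eq)
    then show "real a \<le> real d - 1/2" by simp
  next
    assume "real a \<le> real d - 1/2"
    then have "real a < real d" by simp
    then show "a < d" by (simp only: of_nat_less_iff)
  qed
  have "prob {\<omega> \<in> space M. Y \<omega> = d} = prob ({\<omega> \<in> space M. Y \<omega> \<le> d} - {\<omega> \<in> space M. Y \<omega> < d})"
    by (rule arg_cong[where f = prob]) auto
  also have "\<dots> = prob {\<omega> \<in> space M. Y \<omega> \<le> d} - prob {\<omega> \<in> space M. Y \<omega> < d}"
    by (rule finite_measure_Diff[OF sets sets]) auto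
  finally show ?thesis
    by (simp add: cdf_distr_real_of_nat[OF Y] le_iff less_iff)
qed

lemma weak_conv_nat_imp_prob_eq:
  fixes Y :: "nat \<Rightarrow> 'a \<Rightarrow> nat" and Z :: "'a \<Rightarrow> nat"
  assumes Y: "eventually (\<lambda>n. Y n \<in> measurable M (count_space UNIV)) sequentially"
    and Z: "Z \<in> measurable M (count_space UNIV)"
    and conv: "weak_conv_m (\<lambda>n. distr M borel (\<lambda>\<omega>. real (Y n \<omega>))) (distr M borel (\<lambda>\<omega>. real (Z \<omega>)))"
  shows "(\<lambda>n. prob {\<omega> \<in> space M. Y n \<omega> = d}) \<longlonglongrightarrow> prob {\<omega> \<in> space M. Z \<omega> = d}"
proof -
  have between: "x \<notin> \<nat>" if "real m < x" "x < real m + 1" for m x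
    using that by (auto elim!: Nats_cases)
  have not_nat: "real d + 1/2 \<notin> \<nat>" "real d - 1/2 \<notin> \<nat>"
  proof -
    show "real d + 1/2 \<notin> \<nat>" using between[of d] by simp
    show "real d - 1/2 \<notin> \<nat>"
    proof (cases d)
      case 0
      then show ?thesis by (auto elim!: Nats_cases)
    next
      case (Suc m)
      then show ?thesis using between[of m] by simp
    qed
  qed
  have "(\<lambda>n. cdf (distr M borel (\<lambda>\<omega>. real (Y n \<omega>))) x) \<longlonglongrightarrow> cdf (distr M borel (\<lambda>\<omega>. real (Z \<omega>))) x"
    if "x \<notin> \<nat>" for x
    using conv isCont_cdf_distr_real_of_nat[OF Z that] unfolding weak_conv_m_def weak_conv_def by blast
  then have "(\<lambda>n. cdf (distr M borel (\<lambda>\<omega>. real (Y n \<omega>))) (real d + 1/2)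
      - cdf (distr M borel (\<lambda>\<omega>. real (Y n \<omega>))) (real d - 1/2)) \<longlonglongrightarrow> prob {\<omega> \<in> space M. Z \<omega> = d}"
    unfolding prob_eq_nat_cdf_diff[OF Z] using not_nat by (intro tendsto_diff)
  moreover have "eventually (\<lambda>n. cdf (distr M borel (\<lambda>\<omega>. real (Y n \<omega>))) (real d + 1/2)
      - cdf (distr M borel (\<lambda>\<omega>. real (Y n \<omega>))) (real d - 1/2) = prob {\<omega> \<in> space M. Y n \<omega> = d}) sequentially"
    using Y by eventually_elim (simp add: prob_eq_nat_cdf_diff)
  ultimately show ?thesis
    by (rule Lim_transform_eventually)
qed

lemma mean_square_average_le:
  fixes X :: "'i \<Rightarrow> 'a \<Rightarrow> real" and S :: "'i set"
  assumes S: "finite S" "S \<noteq> {}"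
    and meas: "\<And>k. k \<in> S \<Longrightarrow> X k \<in> borel_measurable M"
    and bounded: "\<And>k \<omega>. k \<in> S \<Longrightarrow> \<bar>X k \<omega> - q\<bar> \<le> 1"
    and cross: "\<And>k l. k \<in> S \<Longrightarrow> l \<in> S \<Longrightarrow> k \<noteq> l \<Longrightarrow> expectation (\<lambda>\<omega>. (X k \<omega> - q) * (X l \<omega> - q)) = c"
  shows "integrable M (\<lambda>\<omega>. ((\<Sum>k\<in>S. X k \<omega>) / card S - q)\<^sup>2)"
    and "expectation (\<lambda>\<omega>. ((\<Sum>k\<in>S. X k \<omega>) / card S - q)\<^sup>2) \<le> 1 / card S + \<bar>c\<bar>"
proof -
  define Z where "Z = (\<lambda>k l \<omega>. (X k \<omega> - q) * (X l \<omega> - q))"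
  have K: "real (card S) > 0"
    using S by (simp add: card_gt_0_iff)
  have Z_bounded: "\<bar>Z k l \<omega>\<bar> \<le> 1" if "k \<in> S" "l \<in> S" for k l \<omega>
    unfolding Z_def abs_mult using bounded[OF that(1)] bounded[OF that(2)]
    by (intro mult_le_one) auto
  have Z_int: "integrable M (Z k l)" if "k \<in> S" "l \<in> S" for k l
    using Z_bounded[OF that] meas[OF that(1)] meas[OF that(2)]
    by (intro integrable_const_bound[where B = 1]) (auto simp: Z_def)
  have square: "((\<Sum>k\<in>S. X k \<omega>) / card S - q)\<^sup>2 = (\<Sum>k\<in>S. \<Sum>l\<in>S. Z k l \<omega>) / (card S)\<^sup>2" for \<omega>
  proof -
    have "(\<Sum>k\<in>S. X k \<omega>) / card S - q = (\<Sum>k\<in>S. X k \<omega> - q) / card S"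
      using K by (simp add: sum_subtractf field_simps)
    then show ?thesis
      by (simp add: Z_def power2_eq_square sum_product)
  qed
  show "integrable M (\<lambda>\<omega>. ((\<Sum>k\<in>S. X k \<omega>) / card S - q)\<^sup>2)"
    unfolding square using Z_int by auto
  have "expectation (\<lambda>\<omega>. ((\<Sum>k\<in>S. X k \<omega>) / card S - q)\<^sup>2)
      = (\<Sum>k\<in>S. \<Sum>l\<in>S. expectation (Z k l)) / (card S)\<^sup>2"
    unfolding square using Z_int by (simp add: Bochner_Integration.integral_sum integrable_sum)
  also have "\<dots> \<le> (\<Sum>k\<in>S. \<Sum>l\<in>S. of_bool (k = l) + \<bar>c\<bar>) / (card S)\<^sup>2"
  proof (intro divide_right_mono sum_mono)
    fix k l assume kl: "k \<in> S" "l \<in> S"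
    show "expectation (Z k l) \<le> of_bool (k = l) + \<bar>c\<bar>"
    proof (cases "k = l")
      case True
      have "expectation (Z k l) \<le> expectation (\<lambda>_. 1)"
        using Z_bounded[OF kl] by (intro integral_mono Z_int[OF kl]) (auto simp: abs_le_iff)
      then show ?thesis
        using True prob_space by simp
    next
      case False
      then show ?thesis
        using cross[OF kl] by (simp add: Z_def)
    qed
  qed simp
  also have "\<dots> = 1 / card S + \<bar>c\<bar>"
    using K S by (simp add: sum.distrib of_bool_def sum.delta field_simps power2_eq_square)
  finally show "expectation (\<lambda>\<omega>. ((\<Sum>k\<in>S. X k \<omega>) / card S - q)\<^sup>2) \<le> 1 / card S + \<bar>c\<bar>" .
qed

lemma conv_in_prob_of_mean_square:
  fixes X :: "nat \<Rightarrow> 'a \<Rightarrow> real"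
  assumes moments: "eventually (\<lambda>n. X n \<in> borel_measurable M \<and> integrable M (\<lambda>\<omega>. (X n \<omega> - q n)\<^sup>2)) sequentially"
    and mean_square: "(\<lambda>n. expectation (\<lambda>\<omega>. (X n \<omega> - q n)\<^sup>2)) \<longlonglongrightarrow> 0"
    and q: "q \<longlonglongrightarrow> c"
  shows "conv_in_prob M X c"
  unfolding conv_in_prob_def
proof (intro allI impI)
  fix \<epsilon> :: real assume \<epsilon>: "\<epsilon> > 0"
  have close: "eventually (\<lambda>n. \<bar>q n - c\<bar> < \<epsilon>/2) sequentially"
    using tendstoD[OF q, of "\<epsilon>/2"] \<epsilon> by (simp add: dist_real_def)
  have bound: "eventually (\<lambda>n. prob {\<omega> \<in> space M. \<bar>X n \<omega> - c\<bar> > \<epsilon>}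
      \<le> expectation (\<lambda>\<omega>. (X n \<omega> - q n)\<^sup>2) / (\<epsilon>/2)\<^sup>2) sequentially"
    using close moments
  proof eventually_elim
    case (elim n)
    then have [measurable]: "X n \<in> borel_measurable M" by simp
    have "{\<omega> \<in> space M. \<bar>X n \<omega> - c\<bar> > \<epsilon>} \<subseteq> {\<omega> \<in> space M. \<bar>X n \<omega> - q n\<bar> \<ge> \<epsilon>/2}"
    proof (intro subsetI, clarify)
      fix \<omega> assume "\<epsilon> < \<bar>X n \<omega> - c\<bar>"
      moreover have "\<bar>X n \<omega> - c\<bar> \<le> \<bar>X n \<omega> - q n\<bar> + \<bar>q n - c\<bar>"
        by (rule abs_triangle_ineq[of "X n \<omega> - q n" "q n - c", simplified])
      ultimately show "\<epsilon>/2 \<le> \<bar>X n \<omega> - q n\<bar>"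
        using elim(1) by linarith
    qed
    then have "prob {\<omega> \<in> space M. \<bar>X n \<omega> - c\<bar> > \<epsilon>} \<le> prob {\<omega> \<in> space M. \<bar>X n \<omega> - q n\<bar> \<ge> \<epsilon>/2}"
      by (rule finite_measure_mono) measurable
    also have "\<dots> \<le> expectation (\<lambda>\<omega>. (X n \<omega> - q n)\<^sup>2) / (\<epsilon>/2)\<^sup>2"
      using elim(2) \<epsilon> by (intro second_moment_method) auto
    finally show ?case .
  qed
  have nonneg: "eventually (\<lambda>n. 0 \<le> prob {\<omega> \<in> space M. \<bar>X n \<omega> - c\<bar> > \<epsilon>}) sequentially"
    by simp
  show "(\<lambda>n. prob {\<omega> \<in> space M. \<bar>X n \<omega> - c\<bar> > \<epsilon>}) \<longlonglongrightarrow> 0"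
    using tendsto_sandwich[OF nonneg bound tendsto_const tendsto_divide_zero[OF mean_square]] .
qed

end

lemma measurable_degree:
  assumes "\<And>l. l \<in> {1..kn n} \<Longrightarrow> chi n k l \<in> measurable M (count_space UNIV)"
  shows "degree kn chi n k \<in> measurable M (count_space UNIV)"
  unfolding degree_def[abs_def] using assms by (intro measurable_card_filter) auto

lemma measurable_degree_frac:
  assumes "\<And>k l. k \<in> {1..kn n} \<Longrightarrow> l \<in> {1..kn n} \<Longrightarrow> chi n k l \<in> measurable M (count_space UNIV)"
  shows "degree_frac kn chi n d \<in> borel_measurable M"
proof -
  have "node_count kn chi n d \<in> measurable M (count_space UNIV)"
    unfolding node_count_def[abs_def]
  proof (intro measurable_card_filter)
    fix k assume "k \<in> {1..kn n}"
    then have "degree kn chi n k \<in> measurable M (count_space UNIV)"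
      using assms by (intro measurable_degree)
    then show "(\<lambda>\<omega>. degree kn chi n k \<omega> = d) \<in> measurable M (count_space UNIV)"
      by (rule measurable_compose[where g = "\<lambda>m. m = d"]) simp
  qed simp
  then have "(\<lambda>\<omega>. real (node_count kn chi n d \<omega>) / real (card {1..kn n})) \<in> borel_measurable M"
    by (rule measurable_compose[where g = "\<lambda>m. real m / real (card {1..kn n})"]) simp
  then show ?thesis
    by (simp add: degree_frac_def[abs_def])
qed

lemma degree_frac_eq_average:
  "degree_frac kn chi n d \<omega> = (\<Sum>k\<in>{1..kn n}. of_bool (degree kn chi n k \<omega> = d)) / real (kn n)"
proof -
  have "real (node_count kn chi n d \<omega>) = (\<Sum>k\<in>{1..kn n}. of_bool (degree kn chi n k \<omega> = d))"
    unfolding node_count_def real_of_card sum.inter_filter[OF finite_atLeastAtMost] of_bool_def ..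
  then show ?thesis
    by (simp add: degree_frac_def)
qed

lemma (in prob_space) degree_frac_mean_square_le:
  fixes d :: nat
  assumes K: "2 \<le> kn n"
    and chi_meas: "\<And>k l. k \<in> {1..kn n} \<Longrightarrow> l \<in> {1..kn n} \<Longrightarrow> chi n k l \<in> measurable M (count_space UNIV)"
    and same_distr: "\<And>k. k \<in> {1..kn n} \<Longrightarrow>
        distr M (count_space UNIV) (degree kn chi n k) = distr M (count_space UNIV) (degree kn chi n 1)"
    and same_joint_distr: "\<And>k l. k \<in> {1..kn n} \<Longrightarrow> l \<in> {1..kn n} \<Longrightarrow> k \<noteq> l \<Longrightarrow>
        distr M (count_space UNIV) (\<lambda>\<omega>. (degree kn chi n k \<omega>, degree kn chi n l \<omega>))
        = distr M (count_space UNIV) (\<lambda>\<omega>. (degree kn chi n 1 \<omega>, degree kn chi n 2 \<omega>))"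
  defines "q \<equiv> prob {\<omega> \<in> space M. degree kn chi n 1 \<omega> = d}"
  shows "integrable M (\<lambda>\<omega>. (degree_frac kn chi n d \<omega> - q)\<^sup>2)"
    and "expectation (\<lambda>\<omega>. (degree_frac kn chi n d \<omega> - q)\<^sup>2) \<le> 1 / real (kn n)
      + \<bar>covar M (\<lambda>\<omega>. of_bool (degree kn chi n 1 \<omega> = d)) (\<lambda>\<omega>. of_bool (degree kn chi n 2 \<omega> = d))\<bar>"
proof -
  define I where "I = (\<lambda>k \<omega>. of_bool (degree kn chi n k \<omega> = d) :: real)"
  have one_two: "1 \<in> {1..kn n}" "2 \<in> {1..kn n}"
    using K by auto
  have deg_meas: "degree kn chi n k \<in> measurable M (count_space UNIV)" if "k \<in> {1..kn n}" for k
    using chi_meas that by (intro measurable_degree)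
  have I_meas: "I k \<in> borel_measurable M" if "k \<in> {1..kn n}" for k
    unfolding I_def by (rule measurable_compose[OF deg_meas[OF that]]) simp
  have mean: "expectation (I k) = q" if k: "k \<in> {1..kn n}" for k
  proof -
    have "expectation (I k) = expectation (I 1)"
      unfolding I_def using deg_meas[OF k] deg_meas[OF one_two(1)] same_distr[OF k]
      by (rule integral_eq_if_distr_eq) simp
    also have "\<dots> = expectation (indicator {\<omega> \<in> space M. degree kn chi n 1 \<omega> = d})"
      by (rule Bochner_Integration.integral_cong) (auto simp: I_def)
    also have "\<dots> = q"
      unfolding q_def using measurable_sets[OF deg_meas[OF one_two(1)], of "{d}"]
      by (simp add: vimage_def Int_def conj_commute)
    finally show ?thesis .
  qed
  have cross: "expectation (\<lambda>\<omega>. (I k \<omega> - q) * (I l \<omega> - q)) = covar M (I 1) (I 2)"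
    if kl: "k \<in> {1..kn n}" "l \<in> {1..kn n}" "k \<noteq> l" for k l
  proof -
    define g where "g = (\<lambda>(a, b). (of_bool (a = d) - q) * (of_bool (b = d) - q) :: real)"
    have "expectation (\<lambda>\<omega>. g (degree kn chi n k \<omega>, degree kn chi n l \<omega>))
        = expectation (\<lambda>\<omega>. g (degree kn chi n 1 \<omega>, degree kn chi n 2 \<omega>))"
      using measurable_pair_countable[OF deg_meas[OF kl(1)] deg_meas[OF kl(2)]]
        measurable_pair_countable[OF deg_meas[OF one_two(1)] deg_meas[OF one_two(2)]]
        same_joint_distr[OF kl]
      by (rule integral_eq_if_distr_eq) simp
    then have "expectation (\<lambda>\<omega>. (I k \<omega> - q) * (I l \<omega> - q)) = expectation (\<lambda>\<omega>. (I 1 \<omega> - q) * (I 2 \<omega> - q))"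
      by (simp add: g_def I_def)
    then show ?thesis
      unfolding covar_def mean[OF one_two(1)] mean[OF one_two(2)] .
  qed
  have bounded: "\<bar>I k \<omega> - q\<bar> \<le> 1" for k \<omega>
    using prob_le_1[of "{\<omega> \<in> space M. degree kn chi n 1 \<omega> = d}"] by (auto simp: I_def q_def)
  note average = mean_square_average_le[of "{1..kn n}" I q, OF _ _ I_meas bounded cross]
  show "integrable M (\<lambda>\<omega>. (degree_frac kn chi n d \<omega> - q)\<^sup>2)"
    and "expectation (\<lambda>\<omega>. (degree_frac kn chi n d \<omega> - q)\<^sup>2) \<le> 1 / real (kn n)
      + \<bar>covar M (\<lambda>\<omega>. of_bool (degree kn chi n 1 \<omega> = d)) (\<lambda>\<omega>. of_bool (degree kn chi n 2 \<omega> = d))\<bar>"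
    using average K by (simp_all add: degree_frac_eq_average I_def)
qed

theorem proposition2:
  fixes M :: "'a measure"
    and kn :: "nat \<Rightarrow> nat"
    and chi :: "nat \<Rightarrow> nat \<Rightarrow> nat \<Rightarrow> 'a \<Rightarrow> bool"
    and D :: "'a \<Rightarrow> nat"
    and p :: "nat \<Rightarrow> real"
  assumes M: "prob_space M"
    and kn_ge2: "\<And>n. n \<ge> 2 \<Longrightarrow> kn n \<ge> 2"
    and chi_meas: "\<And>n k l. n \<ge> 2 \<Longrightarrow> k \<in> {1..kn n} \<Longrightarrow> l \<in> {1..kn n} \<Longrightarrow>
        chi n k l \<in> measurable M (count_space UNIV)"
    and kn_lim: "filterlim kn at_top sequentially"
    and A1: "\<And>n k. n \<ge> 2 \<Longrightarrow> k \<in> {1..kn n} \<Longrightarrow>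
        distr M (count_space UNIV) (degree kn chi n k) = distr M (count_space UNIV) (degree kn chi n 1)"
    and A2: "\<And>n k l. n \<ge> 2 \<Longrightarrow> k \<in> {1..kn n} \<Longrightarrow> l \<in> {1..kn n} \<Longrightarrow> k \<noteq> l \<Longrightarrow>
        distr M (count_space UNIV) (\<lambda>\<omega>. (degree kn chi n k \<omega>, degree kn chi n l \<omega>))
        = distr M (count_space UNIV) (\<lambda>\<omega>. (degree kn chi n 1 \<omega>, degree kn chi n 2 \<omega>))"
    and D_meas: "D \<in> measurable M (count_space UNIV)"
    and p_def: "\<And>d. p d = measure M {\<omega> \<in> space M. D \<omega> = d}"
    and B: "weak_conv_m (\<lambda>n. distr M borel (\<lambda>\<omega>. real (degree kn chi n 1 \<omega>)))
                        (distr M borel (\<lambda>\<omega>. real (D \<omega>)))"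
    and C: "\<And>d. (\<lambda>n. covar M (\<lambda>\<omega>. of_bool (degree kn chi n 1 \<omega> = d))
                               (\<lambda>\<omega>. of_bool (degree kn chi n 2 \<omega> = d))) \<longlonglongrightarrow> 0"
  shows "\<forall>d. conv_in_prob M (\<lambda>n. degree_frac kn chi n d) (p d)"
proof
  fix d :: nat
  interpret prob_space M by (rule M)
  define q where "q n = prob {\<omega> \<in> space M. degree kn chi n 1 \<omega> = d}" for n
  define c where "c n = covar M (\<lambda>\<omega>. of_bool (degree kn chi n 1 \<omega> = d))
    (\<lambda>\<omega>. of_bool (degree kn chi n 2 \<omega> = d))" for n
  have bound: "eventually (\<lambda>n. degree_frac kn chi n d \<in> borel_measurable M
      \<and> integrable M (\<lambda>\<omega>. (degree_frac kn chi n d \<omega> - q n)\<^sup>2)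
      \<and> expectation (\<lambda>\<omega>. (degree_frac kn chi n d \<omega> - q n)\<^sup>2) \<le> 1 / real (kn n) + \<bar>c n\<bar>) sequentially"
    using eventually_ge_at_top[of 2]
  proof eventually_elim
    case (elim n)
    note chi_n = chi_meas[OF elim]
    show ?case
      using degree_frac_mean_square_le[OF kn_ge2[OF elim] chi_n A1[OF elim] A2[OF elim], of d]
        measurable_degree_frac[where chi = chi and n = n and d = d, OF chi_n]
      by (simp add: q_def c_def)
  qed
  have "eventually (\<lambda>n. degree kn chi n 1 \<in> measurable M (count_space UNIV)) sequentially"
    using eventually_ge_at_top[of 2]
    by eventually_elim (use kn_ge2 chi_meas in \<open>auto intro!: measurable_degree\<close>)
  then have q_lim: "q \<longlonglongrightarrow> p d"
    unfolding q_def p_def using D_meas B by (rule weak_conv_nat_imp_prob_eq)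
  have "(\<lambda>n. 1 / real (kn n) + \<bar>c n\<bar>) \<longlonglongrightarrow> 0"
    using tendsto_add[OF tendsto_divide_0[OF tendsto_const
      filterlim_at_top_imp_at_infinity[OF filterlim_compose[OF filterlim_real_sequentially kn_lim]]]
      tendsto_rabs_zero[OF C[of d, folded c_def]]] by simp
  then have mean_square_lim: "(\<lambda>n. expectation (\<lambda>\<omega>. (degree_frac kn chi n d \<omega> - q n)\<^sup>2)) \<longlonglongrightarrow> 0"
    by (rule tendsto_sandwich[rotated 2, OF tendsto_const]) (use bound in \<open>auto elim: eventually_mono\<close>)
  show "conv_in_prob M (\<lambda>n. degree_frac kn chi n d) (p d)"
    using bound by (intro conv_in_prob_of_mean_square[OF _ mean_square_lim q_lim]) (auto elim: eventually_mono)
qed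

end
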